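(* Let $V$ be an $n$-dimensional complex vector space with orthonormal basis $e_1,\ldots,e_n$ for a nondegenerate symmetric bilinear form, let $a_{ij}=e_i\wedge e_j\in\Lambda_2(V)$, and $A=(a_{ij})_{1\le i,j\le n}\in\operatorname{Mat}_{n,n}(\Lambda(\Lambda_2(V)))$. Then for $l\ge 1$ we have $\operatorname{tr}(A^l)=0$ unless $l\equiv 3\pmod 4$.
   Context: $\Lambda(\Lambda_2(V))$ is the exterior algebra on $\Lambda_2(V)$; its products are exterior products, and matrix products are taken with entries multiplied in the order written. *)

theory Defs
  imports Complex_Main "HOL-Library.Product_Lexorder"
begin

text \<open>Exterior algebra \<Lambda>(W) over the complex numbers on a vector space W with a
  basis indexed by pairs (i,j) with i < j (the basis e_i \<and> e_j of \<Lambda>_2(V)).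
  An element is given by its coefficients on the standard monomial basis
  w_S = w_{s_1} \<and> ... \<and> w_{s_k} (s_1 < ... < s_k in the lexicographic order),
  i.e. as a function from finite sets of generators to complex numbers.\<close>

type_synonym ext = "(nat \<times> nat) set \<Rightarrow> complex"

text \<open>Sign of w_S \<and> w_T = ext_sign S T * w_(S \<union> T) for disjoint S, T.\<close>
definition ext_sign :: "(nat \<times> nat) set \<Rightarrow> (nat \<times> nat) set \<Rightarrow> complex" where
  "ext_sign S T = (-1) ^ card {(s, t). s \<in> S \<and> t \<in> T \<and> t < s}"

definition ext_mult :: "ext \<Rightarrow> ext \<Rightarrow> ext" where
  "ext_mult x y = (\<lambda>U. if finite U
      then (\<Sum>S\<in>Pow U. ext_sign S (U - S) * x S * y (U - S)) else 0)"

definition ext_zero :: ext where "ext_zero = (\<lambda>_. 0)"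

definition ext_one :: ext where "ext_one = (\<lambda>U. if U = {} then 1 else 0)"

definition gen_a :: "nat \<Rightarrow> nat \<Rightarrow> ext" where
  "gen_a i j = (\<lambda>U. if i < j then (if U = {(i, j)} then 1 else 0)
                    else if j < i then (if U = {(j, i)} then -1 else 0)
                    else 0)"

definition mat_mult :: "nat \<Rightarrow> (nat \<Rightarrow> nat \<Rightarrow> ext) \<Rightarrow> (nat \<Rightarrow> nat \<Rightarrow> ext) \<Rightarrow> (nat \<Rightarrow> nat \<Rightarrow> ext)" where
  "mat_mult n M N = (\<lambda>i k U. \<Sum>j\<in>{1..n}. ext_mult (M i j) (N j k) U)"

definition mat_id :: "nat \<Rightarrow> nat \<Rightarrow> ext" where
  "mat_id = (\<lambda>i k. if i = k then ext_one else ext_zero)"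

fun mat_pow :: "nat \<Rightarrow> (nat \<Rightarrow> nat \<Rightarrow> ext) \<Rightarrow> nat \<Rightarrow> (nat \<Rightarrow> nat \<Rightarrow> ext)" where
  "mat_pow n M 0 = mat_id"
| "mat_pow n M (Suc l) = mat_mult n (mat_pow n M l) M"

definition mat_trace :: "nat \<Rightarrow> (nat \<Rightarrow> nat \<Rightarrow> ext) \<Rightarrow> ext" where
  "mat_trace n M = (\<lambda>U. \<Sum>i\<in>{1..n}. M i i U)"

definition matA :: "nat \<Rightarrow> nat \<Rightarrow> ext" where
  "matA = (\<lambda>i j. gen_a i j)"

end

theory Submission
  imports Defs
begin

text \<open>Entries of a product of matrices whose entries are homogeneous of degrees p and q
  graded-commute with sign (-1)^(pq), and the entries of A have degree 1.  Rotating the trace,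
  tr(A^(m+1)) = tr(A^m A) = (-1)^m tr(A A^m), which kills the trace for even l.
  Transposing, A^T = -A and (MN)^T = (-1)^(pq) N^T M^T give (A^l)^T = (-1)^(l(l+1)/2) A^l,
  and since the trace is invariant under transposition it vanishes when l(l+1)/2 is odd,
  i.e. for l \<equiv> 1 (mod 4).\<close>

lemma ext_sign_Un_right:
  assumes "finite S" "finite T" "finite R" "T \<inter> R = {}"
  shows "ext_sign S (T \<union> R) = ext_sign S T * ext_sign S R"
proof -
  have split: "{(s, t). s \<in> S \<and> t \<in> T \<union> R \<and> t < s} =
      {(s, t). s \<in> S \<and> t \<in> T \<and> t < s} \<union> {(s, t). s \<in> S \<and> t \<in> R \<and> t < s}" by auto
  have "finite {(s, t). s \<in> S \<and> t \<in> T \<and> t < s}" "finite {(s, t). s \<in> S \<and> t \<in> R \<and> t < s}"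
    by (rule finite_subset[of _ "S \<times> T"], use assms in auto)
       (rule finite_subset[of _ "S \<times> R"], use assms in auto)
  then show ?thesis
    unfolding ext_sign_def split using assms(4) by (simp add: card_Un_disjoint power_add disjoint_iff)
qed

lemma ext_sign_Un_left:
  assumes "finite S" "finite T" "finite R" "S \<inter> T = {}"
  shows "ext_sign (S \<union> T) R = ext_sign S R * ext_sign T R"
proof -
  have split: "{(s, t). s \<in> S \<union> T \<and> t \<in> R \<and> t < s} =
      {(s, t). s \<in> S \<and> t \<in> R \<and> t < s} \<union> {(s, t). s \<in> T \<and> t \<in> R \<and> t < s}" by auto
  have "finite {(s, t). s \<in> S \<and> t \<in> R \<and> t < s}" "finite {(s, t). s \<in> T \<and> t \<in> R \<and> t < s}"
    by (rule finite_subset[of _ "S \<times> R"], use assms in auto)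
       (rule finite_subset[of _ "T \<times> R"], use assms in auto)
  then show ?thesis
    unfolding ext_sign_def split using assms(4) by (simp add: card_Un_disjoint power_add disjoint_iff)
qed

lemma ext_sign_assoc:
  assumes "finite S" "finite T" "finite R" "S \<inter> T = {}" "S \<inter> R = {}" "T \<inter> R = {}"
  shows "ext_sign S (T \<union> R) * ext_sign T R = ext_sign (S \<union> T) R * ext_sign S T"
  using assms by (simp add: ext_sign_Un_left ext_sign_Un_right)

text \<open>Every pair in S \<times> T is an inversion either for (S, T) or for (T, S).\<close>
lemma ext_sign_swap:
  assumes "finite S" "finite T" "S \<inter> T = {}"
  shows "ext_sign S T = (-1) ^ (card S * card T) * ext_sign T S"
proof -
  let ?A = "{(s, t). s \<in> S \<and> t \<in> T \<and> t < s}"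
  let ?B = "{(s, t). s \<in> S \<and> t \<in> T \<and> s < t}"
  have "s \<noteq> t" if "s \<in> S" "t \<in> T" for s t
    using that assms(3) by auto
  then have "S \<times> T = ?A \<union> ?B"
    by (auto simp: neq_iff)
  then have "card S * card T = card (?A \<union> ?B)"
    by (simp flip: card_cartesian_product)
  also have "\<dots> = card ?A + card ?B"
    by (rule card_Un_disjoint) (rule finite_subset[of _ "S \<times> T"], use assms in auto)+
  finally have card_ST: "card S * card T = card ?A + card ?B" .
  have "{(t, s). t \<in> T \<and> s \<in> S \<and> s < t} = prod.swap ` ?B" by auto
  then have "ext_sign T S = (-1) ^ card ?B"
    unfolding ext_sign_def by (simp add: card_image)
  moreover have "ext_sign S T = (-1) ^ card ?A" unfolding ext_sign_def by simp
  ultimately show ?thesis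
    unfolding card_ST by (simp add: power_add mult.assoc flip: power_mult_distrib)
qed

lemma ext_sign_empty [simp]: "ext_sign S {} = 1" "ext_sign {} S = 1"
  unfolding ext_sign_def by auto

lemma ext_mult_assoc: "ext_mult (ext_mult x y) z = ext_mult x (ext_mult y z)"
proof
  fix U
  show "ext_mult (ext_mult x y) z U = ext_mult x (ext_mult y z) U"
  proof (cases "finite U")
    case False
    then show ?thesis by (simp add: ext_mult_def)
  next
    case fin: True
    let ?f = "\<lambda>(V, S). ext_sign V (U - V) * ext_sign S (V - S) * x S * y (V - S) * z (U - V)"
    let ?g = "\<lambda>(S, T). ext_sign S (U - S) * x S * (ext_sign T (U - S - T) * y T * z (U - S - T))"
    have "ext_mult (ext_mult x y) z U = (\<Sum>V\<in>Pow U. \<Sum>S\<in>Pow V. ?f (V, S))"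
      unfolding ext_mult_def using fin
      by (auto intro!: sum.cong simp: sum_distrib_left sum_distrib_right finite_subset mult.assoc)
    also have "\<dots> = sum ?f (Sigma (Pow U) Pow)"
      using fin by (subst sum.Sigma) (auto intro: finite_subset)
    also have "\<dots> = sum ?g (Sigma (Pow U) (\<lambda>S. Pow (U - S)))"
    proof (rule sum.reindex_bij_witness[where j = "\<lambda>(V, S). (S, V - S)" and i = "\<lambda>(S, T). (S \<union> T, S)"])
      fix a assume "a \<in> Sigma (Pow U) Pow"
      then obtain V S where a: "a = (V, S)" and SV: "S \<subseteq> V" "V \<subseteq> U" by auto
      then have "finite S" "finite V" using fin by (auto intro: finite_subset)
      then have "ext_sign S ((V - S) \<union> (U - V)) * ext_sign (V - S) (U - V)
          = ext_sign (S \<union> (V - S)) (U - V) * ext_sign S (V - S)"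
        using fin SV by (intro ext_sign_assoc) auto
      moreover have "U - S = (V - S) \<union> (U - V)" "S \<union> (V - S) = V" "U - S - (V - S) = U - V"
        using SV by auto
      ultimately show "?g (case a of (V, S) \<Rightarrow> (S, V - S)) = ?f a"
        unfolding a by (simp add: algebra_simps)
    qed auto
    also have "\<dots> = (\<Sum>S\<in>Pow U. \<Sum>T\<in>Pow (U - S). ?g (S, T))"
      using fin by (subst sum.Sigma) (auto intro: finite_subset)
    also have "\<dots> = ext_mult x (ext_mult y z) U"
      unfolding ext_mult_def using fin by (auto intro!: sum.cong simp: sum_distrib_left)
    finally show ?thesis .
  qed
qed

lemma ext_mult_sum_left:
  "finite J \<Longrightarrow> ext_mult (\<lambda>V. \<Sum>j\<in>J. f j V) y U = (\<Sum>j\<in>J. ext_mult (f j) y U)"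
  unfolding ext_mult_def by (simp add: sum_distrib_left sum_distrib_right sum.swap[of _ J] mult.assoc)

lemma ext_mult_sum_right:
  "finite J \<Longrightarrow> ext_mult x (\<lambda>V. \<Sum>j\<in>J. f j V) U = (\<Sum>j\<in>J. ext_mult x (f j) U)"
  unfolding ext_mult_def by (simp add: sum_distrib_left sum.swap[of _ J] mult.assoc)

lemma ext_mult_scale_left: "ext_mult (\<lambda>V. c * x V) y U = c * ext_mult x y U"
  unfolding ext_mult_def by (simp add: sum_distrib_left algebra_simps)

lemma ext_mult_scale_right: "ext_mult x (\<lambda>V. c * y V) U = c * ext_mult x y U"
  unfolding ext_mult_def by (simp add: sum_distrib_left algebra_simps)

lemma ext_mult_zero_left: "ext_mult ext_zero x U = 0"
  unfolding ext_mult_def ext_zero_def by simp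

lemma ext_mult_zero_right: "ext_mult x ext_zero U = 0"
  unfolding ext_mult_def ext_zero_def by simp

definition homogeneous :: "nat \<Rightarrow> ext \<Rightarrow> bool" where
  "homogeneous p x \<longleftrightarrow> (\<forall>U. x U \<noteq> 0 \<longrightarrow> finite U \<and> card U = p)"

lemma homogeneous_zero: "homogeneous p ext_zero"
  unfolding homogeneous_def ext_zero_def by auto

lemma homogeneous_one: "homogeneous 0 ext_one"
  unfolding homogeneous_def ext_one_def by auto

lemma homogeneous_gen_a: "homogeneous 1 (gen_a i j)"
  unfolding homogeneous_def gen_a_def by auto

lemma homogeneous_sum:
  "(\<And>j. j \<in> J \<Longrightarrow> homogeneous p (f j)) \<Longrightarrow> homogeneous p (\<lambda>U. \<Sum>j\<in>J. f j U)"
  unfolding homogeneous_def by (metis (no_types, lifting) sum.neutral)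

lemma homogeneous_ext_mult:
  assumes "homogeneous p x" "homogeneous q y"
  shows "homogeneous (p + q) (ext_mult x y)"
  unfolding homogeneous_def
proof (intro allI impI)
  fix U assume nz: "ext_mult x y U \<noteq> 0"
  then have fin: "finite U" by (auto simp: ext_mult_def split: if_splits)
  with nz have "(\<Sum>S\<in>Pow U. ext_sign S (U - S) * x S * y (U - S)) \<noteq> 0"
    by (simp add: ext_mult_def)
  then obtain S where S: "S \<subseteq> U" "ext_sign S (U - S) * x S * y (U - S) \<noteq> 0"
    by (meson PowD sum.not_neutral_contains_not_neutral)
  then have "card S = p" "card (U - S) = q" using assms unfolding homogeneous_def by auto
  moreover have "card U = card S + card (U - S)"
    using S(1) fin by (simp add: card_Diff_subset card_mono finite_subset)
  ultimately show "finite U \<and> card U = p + q" using fin by simp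
qed

lemma ext_mult_one_left: "homogeneous p x \<Longrightarrow> ext_mult ext_one x U = x U"
proof (cases "finite U")
  case True
  then have "ext_mult ext_one x U = (\<Sum>S\<in>Pow U. ext_sign S (U - S) * ext_one S * x (U - S))"
    by (simp add: ext_mult_def)
  also have "\<dots> = (\<Sum>S\<in>Pow U. if S = {} then x U else 0)"
    by (rule sum.cong) (auto simp: ext_one_def)
  finally have "ext_mult ext_one x U = \<dots>" .
  then show ?thesis using True by simp
qed (auto simp: ext_mult_def homogeneous_def)

lemma ext_mult_one_right: "homogeneous p x \<Longrightarrow> ext_mult x ext_one U = x U"
proof (cases "finite U")
  case True
  then have "ext_mult x ext_one U = (\<Sum>S\<in>Pow U. ext_sign S (U - S) * x S * ext_one (U - S))"
    by (simp add: ext_mult_def)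
  also have "\<dots> = (\<Sum>S\<in>Pow U. if S = U then x U else 0)"
    by (rule sum.cong) (auto simp: ext_one_def)
  finally have "ext_mult x ext_one U = \<dots>" .
  then show ?thesis using True by simp
qed (auto simp: ext_mult_def homogeneous_def)

lemma ext_mult_commute_homogeneous:
  assumes "homogeneous p x" "homogeneous q y"
  shows "ext_mult x y U = (-1) ^ (p * q) * ext_mult y x U"
proof (cases "finite U")
  case False
  then show ?thesis by (simp add: ext_mult_def)
next
  case fin: True
  have "ext_mult y x U = (\<Sum>T\<in>Pow U. ext_sign T (U - T) * y T * x (U - T))"
    using fin by (simp add: ext_mult_def)
  also have "\<dots> = (\<Sum>S\<in>Pow U. ext_sign (U - S) S * y (U - S) * x S)"
    by (rule sum.reindex_bij_witness[where i = "\<lambda>S. U - S" and j = "\<lambda>S. U - S"])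
       (auto simp: double_diff)
  moreover have term_swap: "ext_sign S (U - S) * x S * y (U - S)
      = (-1) ^ (p * q) * (ext_sign (U - S) S * y (U - S) * x S)" for S
  proof (cases "x S = 0 \<or> y (U - S) = 0")
    case False
    then have "card S = p" "card (U - S) = q" "finite S" "finite (U - S)"
      using assms unfolding homogeneous_def by auto
    then show ?thesis using ext_sign_swap[of S "U - S"] by simp
  qed auto
  ultimately show ?thesis
    unfolding ext_mult_def using fin by (simp only: term_swap if_True flip: sum_distrib_left)
qed

text \<open>Matrices are total functions but only the entries indexed by {1..n} matter,
  e.g. mat_id is a unit for mat_mult n only up to this equality.\<close>
definition mat_eq :: "nat \<Rightarrow> (nat \<Rightarrow> nat \<Rightarrow> ext) \<Rightarrow> (nat \<Rightarrow> nat \<Rightarrow> ext) \<Rightarrow> bool" where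
  "mat_eq n M N \<longleftrightarrow> (\<forall>i\<in>{1..n}. \<forall>k\<in>{1..n}. M i k = N i k)"

definition mat_transpose :: "(nat \<Rightarrow> nat \<Rightarrow> ext) \<Rightarrow> (nat \<Rightarrow> nat \<Rightarrow> ext)" where
  "mat_transpose M = (\<lambda>i k. M k i)"

definition mat_scale :: "complex \<Rightarrow> (nat \<Rightarrow> nat \<Rightarrow> ext) \<Rightarrow> (nat \<Rightarrow> nat \<Rightarrow> ext)" where
  "mat_scale c M = (\<lambda>i k U. c * M i k U)"

definition mat_homogeneous :: "nat \<Rightarrow> (nat \<Rightarrow> nat \<Rightarrow> ext) \<Rightarrow> bool" where
  "mat_homogeneous p M \<longleftrightarrow> (\<forall>i k. homogeneous p (M i k))"

lemma mat_eq_refl: "mat_eq n M M"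
  by (simp add: mat_eq_def)

lemma mat_eq_sym: "mat_eq n M N \<Longrightarrow> mat_eq n N M"
  by (simp add: mat_eq_def)

lemma mat_eq_trans: "mat_eq n M N \<Longrightarrow> mat_eq n N P \<Longrightarrow> mat_eq n M P"
  by (simp add: mat_eq_def)

lemma mat_mult_cong: "mat_eq n M M' \<Longrightarrow> mat_eq n N N' \<Longrightarrow> mat_eq n (mat_mult n M N) (mat_mult n M' N')"
  unfolding mat_eq_def mat_mult_def by (auto intro!: ext sum.cong)

lemma mat_scale_cong: "mat_eq n M M' \<Longrightarrow> mat_eq n (mat_scale c M) (mat_scale c M')"
  unfolding mat_eq_def mat_scale_def by auto

lemma mat_trace_cong: "mat_eq n M N \<Longrightarrow> mat_trace n M = mat_trace n N"
  unfolding mat_eq_def mat_trace_def by auto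

lemma mat_mult_assoc: "mat_mult n (mat_mult n M N) P = mat_mult n M (mat_mult n N P)"
proof (intro ext)
  fix i k U
  have "mat_mult n (mat_mult n M N) P i k U
      = (\<Sum>j\<in>{1..n}. \<Sum>m\<in>{1..n}. ext_mult (ext_mult (M i m) (N m j)) (P j k) U)"
    unfolding mat_mult_def by (simp add: ext_mult_sum_left)
  also have "\<dots> = (\<Sum>m\<in>{1..n}. \<Sum>j\<in>{1..n}. ext_mult (M i m) (ext_mult (N m j) (P j k)) U)"
    unfolding ext_mult_assoc by (rule sum.swap)
  also have "\<dots> = mat_mult n M (mat_mult n N P) i k U"
    unfolding mat_mult_def by (simp add: ext_mult_sum_right)
  finally show "mat_mult n (mat_mult n M N) P i k U = mat_mult n M (mat_mult n N P) i k U" .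
qed

lemma mat_mult_id_left:
  assumes "mat_homogeneous p M"
  shows "mat_eq n (mat_mult n mat_id M) M"
  unfolding mat_eq_def mat_mult_def
proof (intro ballI ext)
  fix i k U assume "i \<in> {1..n}"
  have "(\<Sum>j\<in>{1..n}. ext_mult (mat_id i j) (M j k) U) = (\<Sum>j\<in>{1..n}. if i = j then M i k U else 0)"
    using assms by (intro sum.cong)
      (auto simp: mat_id_def mat_homogeneous_def ext_mult_one_left[of p] ext_mult_zero_left)
  with \<open>i \<in> {1..n}\<close> show "(\<Sum>j\<in>{1..n}. ext_mult (mat_id i j) (M j k) U) = M i k U" by simp
qed

lemma mat_mult_id_right:
  assumes "mat_homogeneous p M"
  shows "mat_eq n (mat_mult n M mat_id) M"
  unfolding mat_eq_def mat_mult_def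
proof (intro ballI ext)
  fix i k U assume "k \<in> {1..n}"
  have "(\<Sum>j\<in>{1..n}. ext_mult (M i j) (mat_id j k) U) = (\<Sum>j\<in>{1..n}. if j = k then M i k U else 0)"
    using assms by (intro sum.cong)
      (auto simp: mat_id_def mat_homogeneous_def ext_mult_one_right[of p] ext_mult_zero_right)
  with \<open>k \<in> {1..n}\<close> show "(\<Sum>j\<in>{1..n}. ext_mult (M i j) (mat_id j k) U) = M i k U" by simp
qed

lemma mat_mult_scale_left: "mat_mult n (mat_scale c M) N = mat_scale c (mat_mult n M N)"
  unfolding mat_mult_def mat_scale_def by (simp add: ext_mult_scale_left sum_distrib_left)

lemma mat_mult_scale_right: "mat_mult n M (mat_scale c N) = mat_scale c (mat_mult n M N)"
  unfolding mat_mult_def mat_scale_def by (simp add: ext_mult_scale_right sum_distrib_left)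

lemma mat_scale_scale: "mat_scale c (mat_scale d M) = mat_scale (c * d) M"
  unfolding mat_scale_def by (simp add: mult.assoc)

lemma mat_trace_transpose: "mat_trace n (mat_transpose M) = mat_trace n M"
  unfolding mat_trace_def mat_transpose_def by simp

lemma mat_trace_scale: "mat_trace n (mat_scale c M) U = c * mat_trace n M U"
  unfolding mat_trace_def mat_scale_def by (simp add: sum_distrib_left)

lemma mat_homogeneous_mult:
  "mat_homogeneous p M \<Longrightarrow> mat_homogeneous q N \<Longrightarrow> mat_homogeneous (p + q) (mat_mult n M N)"
  unfolding mat_homogeneous_def mat_mult_def by (auto intro!: homogeneous_sum homogeneous_ext_mult)

lemma mat_homogeneous_id: "mat_homogeneous 0 mat_id"
  by (simp add: mat_homogeneous_def mat_id_def homogeneous_one homogeneous_zero)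

lemma mat_homogeneous_pow: "mat_homogeneous p M \<Longrightarrow> mat_homogeneous (l * p) (mat_pow n M l)"
proof (induction l)
  case (Suc l)
  then show ?case using mat_homogeneous_mult[of "l * p" _ p M] by (simp add: add.commute)
qed (simp add: mat_homogeneous_id)

lemma mat_entries_commute:
  assumes "mat_homogeneous p M" "mat_homogeneous q N"
  shows "ext_mult (M i j) (N k m) U = (-1) ^ (p * q) * ext_mult (N k m) (M i j) U"
  using assms by (simp add: mat_homogeneous_def ext_mult_commute_homogeneous)

lemma mat_trace_mult_commute:
  assumes "mat_homogeneous p M" "mat_homogeneous q N"
  shows "mat_trace n (mat_mult n M N) U = (-1) ^ (p * q) * mat_trace n (mat_mult n N M) U"
proof -
  have "mat_trace n (mat_mult n M N) U
      = (\<Sum>i\<in>{1..n}. \<Sum>j\<in>{1..n}. (-1) ^ (p * q) * ext_mult (N j i) (M i j) U)"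
    unfolding mat_trace_def mat_mult_def using mat_entries_commute[OF assms] by simp
  also have "\<dots> = (-1) ^ (p * q) * mat_trace n (mat_mult n N M) U"
    unfolding mat_trace_def mat_mult_def sum_distrib_left by (rule sum.swap)
  finally show ?thesis .
qed

lemma mat_transpose_mult:
  assumes "mat_homogeneous p M" "mat_homogeneous q N"
  shows "mat_transpose (mat_mult n M N)
    = mat_scale ((-1) ^ (p * q)) (mat_mult n (mat_transpose N) (mat_transpose M))"
  unfolding mat_transpose_def mat_scale_def mat_mult_def
  using mat_entries_commute[OF assms] by (simp add: sum_distrib_left)

lemma mat_mult_pow_commute:
  assumes "mat_homogeneous p M"
  shows "mat_eq n (mat_mult n M (mat_pow n M l)) (mat_pow n M (Suc l))"
proof (induction l)
  case 0
  show ?case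
    using mat_eq_trans[OF mat_mult_id_right[OF assms] mat_eq_sym[OF mat_mult_id_left[OF assms]]]
    by simp
next
  case (Suc l)
  have "mat_mult n M (mat_pow n M (Suc l)) = mat_mult n (mat_mult n M (mat_pow n M l)) M"
    by (simp add: mat_mult_assoc)
  with Suc show ?case
    by (simp add: mat_mult_cong mat_eq_refl)
qed

lemma mat_trace_pow_even:
  assumes "mat_homogeneous 1 M" "even l" "l \<ge> 1"
  shows "mat_trace n (mat_pow n M l) = ext_zero"
proof
  fix U
  obtain m where l: "l = Suc m" and "odd m" using assms(2,3) by (cases l) auto
  have "mat_trace n (mat_pow n M l) U = (-1) ^ m * mat_trace n (mat_mult n M (mat_pow n M m)) U"
    using mat_trace_mult_commute[OF mat_homogeneous_pow[OF assms(1)] assms(1)] unfolding l by simp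
  also have "\<dots> = - mat_trace n (mat_pow n M l) U"
    unfolding mat_trace_cong[OF mat_mult_pow_commute[OF assms(1)]] l using \<open>odd m\<close> by simp
  finally show "mat_trace n (mat_pow n M l) U = ext_zero U" by (simp add: ext_zero_def)
qed

lemma mat_transpose_pow_skew:
  assumes "mat_homogeneous 1 M" "mat_transpose M = mat_scale (-1) M"
  shows "mat_eq n (mat_transpose (mat_pow n M l)) (mat_scale ((-1) ^ (l * (l + 1) div 2)) (mat_pow n M l))"
proof (induction l)
  case 0
  show ?case by (simp add: mat_eq_def mat_transpose_def mat_scale_def mat_id_def)
next
  case (Suc m)
  let ?s = "(-1::complex) ^ (m * (m + 1) div 2)"
  have "mat_transpose (mat_pow n M (Suc m))
      = mat_scale ((-1) ^ m * (-1)) (mat_mult n M (mat_transpose (mat_pow n M m)))"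
    using mat_transpose_mult[OF mat_homogeneous_pow[OF assms(1)] assms(1)] assms(2)
    by (simp add: mat_mult_scale_left mat_scale_scale)
  moreover have "mat_eq n (mat_mult n M (mat_transpose (mat_pow n M m)))
      (mat_scale ?s (mat_pow n M (Suc m)))"
    using mat_eq_trans[OF mat_mult_cong[OF mat_eq_refl Suc, unfolded mat_mult_scale_right]
                          mat_scale_cong[OF mat_mult_pow_commute[OF assms(1)]]] .
  ultimately have "mat_eq n (mat_transpose (mat_pow n M (Suc m)))
      (mat_scale ((-1) ^ m * (-1) * ?s) (mat_pow n M (Suc m)))"
    by (metis mat_scale_cong mat_scale_scale)
  moreover have "Suc m * (Suc m + 1) div 2 = m * (m + 1) div 2 + (m + 1)"
    by simp
  ultimately show ?case
    by (simp add: power_add mult.commute)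
qed

lemma mat_trace_pow_4k_plus_1:
  assumes "mat_homogeneous 1 M" "mat_transpose M = mat_scale (-1) M" "l mod 4 = 1"
  shows "mat_trace n (mat_pow n M l) = ext_zero"
proof
  fix U
  obtain k where l: "l = 4 * k + 1" using assms(3) by (metis div_mult_mod_eq add.commute mult.commute)
  have "l * (l + 1) div 2 = (4 * k + 1) * (2 * k + 1)"
    unfolding l by (simp add: algebra_simps)
  then have sign: "(-1::complex) ^ (l * (l + 1) div 2) = -1" by simp
  have "mat_trace n (mat_pow n M l) U = mat_trace n (mat_transpose (mat_pow n M l)) U"
    by (simp add: mat_trace_transpose)
  also have "\<dots> = - mat_trace n (mat_pow n M l) U"
    using mat_trace_cong[OF mat_transpose_pow_skew[OF assms(1,2)]] sign
    by (simp add: mat_trace_scale)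
  finally show "mat_trace n (mat_pow n M l) U = ext_zero U" by (simp add: ext_zero_def)
qed

lemma mat_homogeneous_matA: "mat_homogeneous 1 matA"
  unfolding mat_homogeneous_def matA_def by (blast intro: homogeneous_gen_a)

lemma mat_transpose_matA: "mat_transpose matA = mat_scale (-1) matA"
  unfolding mat_transpose_def mat_scale_def matA_def gen_a_def by (auto intro!: ext)

theorem proposition4p4:
  fixes n l :: nat
  assumes "l \<ge> 1" and "l mod 4 \<noteq> 3"
  shows "mat_trace n (mat_pow n matA l) = ext_zero"
proof (cases "even l")
  case True
  then show ?thesis using mat_trace_pow_even[OF mat_homogeneous_matA _ assms(1)] by simp
next
  case False
  then have "l mod 4 = 1" using assms(2) by presburger
  then show ?thesis using mat_trace_pow_4k_plus_1[OF mat_homogeneous_matA mat_transpose_matA] by simp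
qed

end
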